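(* For every $g\in\mathrm{Sp}(2,1)$, the set of traces of the elements of $g\,(1\oplus\mathrm{Sp}(1,1))\,g^{-1}$ is not contained in $\mathbb R$.
   Context: $\mathbb H$ denotes the quaternions. $\mathrm{Sp}(n,1)=\{A\in\mathrm{GL}(n+1,\mathbb H): A^*I_{n,1}A=I_{n,1}\}$ with $A^*$ the conjugate transpose and $I_{n,1}=\mathrm{diag}(1,\dots,1,-1)$. $1\oplus\mathrm{Sp}(1,1)$ is the subgroup of $\mathrm{Sp}(2,1)$ of block diagonal matrices with $1$ in the upper left entry and an element of $\mathrm{Sp}(1,1)$ in the lower right $2\times 2$ block. The trace of a quaternionic matrix is the sum of its diagonal entries. *)

theory Defs
  imports Complex_Main
begin

datatype quat = Quat (qre: real) (qi: real) (qj: real) (qk: real)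

lemma quat_eq_iff: "x = y \<longleftrightarrow> qre x = qre y \<and> qi x = qi y \<and> qj x = qj y \<and> qk x = qk y"
  by (cases x; cases y) auto

instantiation quat :: ring_1
begin
definition "0 = Quat 0 0 0 0"
definition "1 = Quat 1 0 0 0"
definition "x + y = Quat (qre x + qre y) (qi x + qi y) (qj x + qj y) (qk x + qk y)"
definition "x - y = Quat (qre x - qre y) (qi x - qi y) (qj x - qj y) (qk x - qk y)"
definition "- x = Quat (- qre x) (- qi x) (- qj x) (- qk x)"
definition "x * y = Quat
   (qre x * qre y - qi x * qi y - qj x * qj y - qk x * qk y)
   (qre x * qi y + qi x * qre y + qj x * qk y - qk x * qj y)
   (qre x * qj y - qi x * qk y + qj x * qre y + qk x * qi y)
   (qre x * qk y + qi x * qj y - qj x * qi y + qk x * qre y)"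
instance
  by standard (auto simp: quat_eq_iff zero_quat_def one_quat_def plus_quat_def minus_quat_def
                 uminus_quat_def times_quat_def algebra_simps)
end

definition qcnj :: "quat \<Rightarrow> quat" where
  "qcnj x = Quat (qre x) (- qi x) (- qj x) (- qk x)"

definition quat_of_real :: "real \<Rightarrow> quat" where
  "quat_of_real r = Quat r 0 0 0"

text \<open>An m x m quaternionic matrix is represented as a function nat => nat => quat
  whose entries vanish outside the index range {0..<m} x {0..<m}.\<close>

type_synonym qmatrix = "nat \<Rightarrow> nat \<Rightarrow> quat"

definition qmats :: "nat \<Rightarrow> qmatrix set" where
  "qmats m = {A. \<forall>i j. (m \<le> i \<or> m \<le> j) \<longrightarrow> A i j = 0}"

definition qmat_mult :: "nat \<Rightarrow> qmatrix \<Rightarrow> qmatrix \<Rightarrow> qmatrix" where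
  "qmat_mult m A B = (\<lambda>i j. if i < m \<and> j < m then (\<Sum>k<m. A i k * B k j) else 0)"

definition qmat_id :: "nat \<Rightarrow> qmatrix" where
  "qmat_id m = (\<lambda>i j. if i < m \<and> i = j then 1 else 0)"

definition qmat_ct :: "qmatrix \<Rightarrow> qmatrix" where
  "qmat_ct A = (\<lambda>i j. qcnj (A j i))"

definition qtrace :: "nat \<Rightarrow> qmatrix \<Rightarrow> quat" where
  "qtrace m A = (\<Sum>i<m. A i i)"

definition qGL :: "nat \<Rightarrow> qmatrix set" where
  "qGL m = {A \<in> qmats m. \<exists>B \<in> qmats m. qmat_mult m A B = qmat_id m \<and> qmat_mult m B A = qmat_id m}"

definition qmat_inv :: "nat \<Rightarrow> qmatrix \<Rightarrow> qmatrix" where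
  "qmat_inv m A = (SOME B. B \<in> qmats m \<and> qmat_mult m A B = qmat_id m \<and> qmat_mult m B A = qmat_id m)"

definition I_n1 :: "nat \<Rightarrow> qmatrix" where
  "I_n1 n = (\<lambda>i j. if i = j \<and> i < n then 1 else if i = j \<and> i = n then - 1 else 0)"

definition Sp_n1 :: "nat \<Rightarrow> qmatrix set" where
  "Sp_n1 n = {A \<in> qGL (n + 1). qmat_mult (n + 1) (qmat_ct A) (qmat_mult (n + 1) (I_n1 n) A) = I_n1 n}"

definition one_plus_Sp11 :: "qmatrix set" where
  "one_plus_Sp11 = {(\<lambda>i j. if i = 0 \<and> j = 0 then 1
                           else if 1 \<le> i \<and> 1 \<le> j then B (i - 1) (j - 1) else 0) | B. B \<in> Sp_n1 1}"

end

theory Submission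
  imports Defs
begin

(* Let x = (x0, x1, x2) be the middle column of g and e = (1, 1, -1). Since
   g^-1 = I g^* I with I = I_{2,1}, conjugating diag(1, q, 1) by g gives a matrix whose trace is
   e0 x0 q x0^* + e1 x1 q x1^* + e2 x2 q x2^* up to a real number. If it were real for
   q = i, j, k, the nine resulting linear conditions together with the column identity
   |x0|^2 + |x1|^2 - |x2|^2 = 1 would force v0 v0^T + v1 v1^T = I/4 + v2 v2^T for the
   coordinate vectors vi in R^4 of the xi. The left side has rank at most two, the right side
   is positive definite; their determinants tell them apart. *)

lemma quat_component_simps [simp]:
  "qre 0 = 0" "qi 0 = 0" "qj 0 = 0" "qk 0 = 0"
  "qre 1 = 1" "qi 1 = 0" "qj 1 = 0" "qk 1 = 0"
  "qre (x + y) = qre x + qre y" "qi (x + y) = qi x + qi y" "qj (x + y) = qj x + qj y" "qk (x + y) = qk x + qk y"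
  "qre (x - y) = qre x - qre y" "qi (x - y) = qi x - qi y" "qj (x - y) = qj x - qj y" "qk (x - y) = qk x - qk y"
  "qre (- x) = - qre x" "qi (- x) = - qi x" "qj (- x) = - qj x" "qk (- x) = - qk x"
  "qre (x * y) = qre x * qre y - qi x * qi y - qj x * qj y - qk x * qk y"
  "qi (x * y) = qre x * qi y + qi x * qre y + qj x * qk y - qk x * qj y"
  "qj (x * y) = qre x * qj y - qi x * qk y + qj x * qre y + qk x * qi y"
  "qk (x * y) = qre x * qk y + qi x * qj y - qj x * qi y + qk x * qre y"
  "qre (qcnj x) = qre x" "qi (qcnj x) = - qi x" "qj (qcnj x) = - qj x" "qk (qcnj x) = - qk x"
  by (simp_all add: zero_quat_def one_quat_def plus_quat_def minus_quat_def uminus_quat_def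
      times_quat_def qcnj_def)

lemma range_quat_of_real_iff: "z \<in> range quat_of_real \<longleftrightarrow> qi z = 0 \<and> qj z = 0 \<and> qk z = 0"
proof
  assume "qi z = 0 \<and> qj z = 0 \<and> qk z = 0"
  then have "z = quat_of_real (qre z)" by (simp add: quat_of_real_def quat_eq_iff)
  then show "z \<in> range quat_of_real" by blast
qed (auto simp: quat_of_real_def)

lemma qcnj_one [simp]: "qcnj 1 = 1"
  by (simp add: quat_eq_iff)

lemma qcnj_mult_self_commute: "qcnj q * q = q * qcnj q"
  by (simp add: quat_eq_iff algebra_simps)

definition lorentz_sandwich :: "quat \<Rightarrow> quat \<Rightarrow> quat \<Rightarrow> quat \<Rightarrow> quat" where
  "lorentz_sandwich x0 x1 x2 q = x0 * q * qcnj x0 + x1 * q * qcnj x1 - x2 * q * qcnj x2"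

lemma lorentz_sandwich_one_real: "lorentz_sandwich x0 x1 x2 1 \<in> range quat_of_real"
  by (simp add: range_quat_of_real_iff lorentz_sandwich_def algebra_simps)

definition qcoord :: "quat \<Rightarrow> nat \<Rightarrow> real" where
  "qcoord x r = (if r = 0 then qre x else if r = 1 then qi x else if r = 2 then qj x else qk x)"

lemma lorentz_sandwich_gram:
  assumes "qre (lorentz_sandwich x0 x1 x2 1) = 1"
    and "\<And>q. q \<in> {Quat 0 1 0 0, Quat 0 0 1 0, Quat 0 0 0 1} \<Longrightarrow>
           lorentz_sandwich x0 x1 x2 q \<in> range quat_of_real"
    and "r < 4" "s < 4"
  shows "qcoord x0 r * qcoord x0 s + qcoord x1 r * qcoord x1 s - qcoord x2 r * qcoord x2 s
         = (if r = s then 1/4 else 0)"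
proof -
  have eqs: "qi (lorentz_sandwich x0 x1 x2 q) = 0" "qj (lorentz_sandwich x0 x1 x2 q) = 0"
      "qk (lorentz_sandwich x0 x1 x2 q) = 0"
    if "q \<in> {Quat 0 1 0 0, Quat 0 0 1 0, Quat 0 0 0 1}" for q
    using assms(2)[OF that] by (simp_all add: range_quat_of_real_iff)
  note E = assms(1) eqs[of "Quat 0 1 0 0"] eqs[of "Quat 0 0 1 0"] eqs[of "Quat 0 0 0 1"]
  have "r = 0 \<or> r = 1 \<or> r = 2 \<or> r = 3" "s = 0 \<or> s = 1 \<or> s = 2 \<or> s = 3"
    using assms(3,4) by auto
  then show ?thesis
    using E by (elim disjE) (simp add: lorentz_sandwich_def qcoord_def algebra_simps; linarith)+
qed

definition det3 :: "real \<Rightarrow> real \<Rightarrow> real \<Rightarrow> real \<Rightarrow> real \<Rightarrow> real \<Rightarrow> real \<Rightarrow> real \<Rightarrow> real \<Rightarrow> real" where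
  "det3 a b c d e f g h i = a * (e * i - f * h) - b * (d * i - f * g) + c * (d * h - e * g)"

definition det4 :: "(nat \<Rightarrow> nat \<Rightarrow> real) \<Rightarrow> real" where
  "det4 M =
       M 0 0 * det3 (M 1 1) (M 1 2) (M 1 3) (M 2 1) (M 2 2) (M 2 3) (M 3 1) (M 3 2) (M 3 3)
     - M 0 1 * det3 (M 1 0) (M 1 2) (M 1 3) (M 2 0) (M 2 2) (M 2 3) (M 3 0) (M 3 2) (M 3 3)
     + M 0 2 * det3 (M 1 0) (M 1 1) (M 1 3) (M 2 0) (M 2 1) (M 2 3) (M 3 0) (M 3 1) (M 3 3)
     - M 0 3 * det3 (M 1 0) (M 1 1) (M 1 2) (M 2 0) (M 2 1) (M 2 2) (M 3 0) (M 3 1) (M 3 2)"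

lemma det4_cong: "(\<And>r s. r < 4 \<Longrightarrow> s < 4 \<Longrightarrow> M r s = N r s) \<Longrightarrow> det4 M = det4 N"
  unfolding det4_def by simp

lemma det4_rank_two: "det4 (\<lambda>r s. x r * x s + y r * y s) = 0"
  unfolding det4_def det3_def by (simp add: algebra_simps)

lemma det4_scalar_plus_rank_one:
  "det4 (\<lambda>r s. (if r = s then c else 0) + u r * u s)
   = c ^ 3 * (c + ((u 0)\<^sup>2 + (u 1)\<^sup>2 + (u 2)\<^sup>2 + (u 3)\<^sup>2))"
  unfolding det4_def det3_def by (simp add: power2_eq_square power3_eq_cube; algebra)

lemma rank_two_ne_scalar_plus_rank_one:
  fixes x y u :: "nat \<Rightarrow> real"
  assumes "c > 0"
  shows "\<exists>r < 4. \<exists>s < 4. x r * x s + y r * y s - u r * u s \<noteq> (if r = s then c else 0)"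
proof (rule ccontr)
  assume "\<not> ?thesis"
  then have "det4 (\<lambda>r s. x r * x s + y r * y s) = det4 (\<lambda>r s. (if r = s then c else 0) + u r * u s)"
    by (intro det4_cong) (auto simp: algebra_simps)
  moreover have "c + ((u 0)\<^sup>2 + (u 1)\<^sup>2 + (u 2)\<^sup>2 + (u 3)\<^sup>2) > 0"
    using assms by (simp add: add_pos_nonneg)
  ultimately show False
    unfolding det4_rank_two det4_scalar_plus_rank_one using assms by simp
qed

lemma lorentz_sandwich_nonreal:
  assumes "qre (lorentz_sandwich x0 x1 x2 1) = 1"
  shows "\<exists>q \<in> {Quat 0 1 0 0, Quat 0 0 1 0, Quat 0 0 0 1}.
           lorentz_sandwich x0 x1 x2 q \<notin> range quat_of_real"
proof (rule ccontr)
  assume "\<not> ?thesis"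
  then have "qcoord x0 r * qcoord x0 s + qcoord x1 r * qcoord x1 s - qcoord x2 r * qcoord x2 s
             = (if r = s then 1/4 else 0)" if "r < 4" "s < 4" for r s
    using lorentz_sandwich_gram[OF assms _ that] by blast
  with rank_two_ne_scalar_plus_rank_one[of "1/4" "qcoord x0" "qcoord x1" "qcoord x2"]
  show False by auto
qed

lemma sum_lessThan_3: "(\<Sum>i<3. f i) = f 0 + f 1 + f (2::nat)"
  by (simp add: eval_nat_numeral)

lemma qmat_mult_assoc:
  "qmat_mult m (qmat_mult m A B) C = qmat_mult m A (qmat_mult m B C)"
  unfolding qmat_mult_def
  by (auto intro!: ext simp: sum_distrib_left sum_distrib_right mult.assoc intro: sum.swap)

lemma qmat_mult_id_left: "A \<in> qmats m \<Longrightarrow> qmat_mult m (qmat_id m) A = A"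
  unfolding qmat_mult_def qmat_id_def qmats_def
  by (auto intro!: ext simp: if_distrib[of "\<lambda>x. x * _"] cong: if_cong)

lemma qmat_mult_id_right: "A \<in> qmats m \<Longrightarrow> qmat_mult m A (qmat_id m) = A"
  unfolding qmat_mult_def qmat_id_def qmats_def
  by (auto intro!: ext simp: if_distrib[of "\<lambda>x. _ * x"] cong: if_cong)

lemma qmat_mult_qmats: "qmat_mult m A B \<in> qmats m"
  unfolding qmat_mult_def qmats_def by auto

lemma qmat_inv_eqI:
  assumes "A \<in> qGL m" "L \<in> qmats m" "qmat_mult m L A = qmat_id m"
  shows "qmat_inv m A = L"
proof -
  have "\<exists>B. B \<in> qmats m \<and> qmat_mult m A B = qmat_id m \<and> qmat_mult m B A = qmat_id m"
    using assms(1) unfolding qGL_def by blast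
  then have inv: "qmat_inv m A \<in> qmats m" "qmat_mult m A (qmat_inv m A) = qmat_id m"
    unfolding qmat_inv_def by (metis (mono_tags, lifting) someI_ex)+
  have "qmat_inv m A = qmat_mult m (qmat_mult m L A) (qmat_inv m A)"
    using inv(1) assms(3) by (simp add: qmat_mult_id_left)
  also have "\<dots> = L"
    using inv(2) assms(2) by (simp add: qmat_mult_assoc qmat_mult_id_right)
  finally show ?thesis .
qed

definition qmat_diag :: "nat \<Rightarrow> (nat \<Rightarrow> quat) \<Rightarrow> qmatrix" where
  "qmat_diag m d = (\<lambda>i j. if i < m \<and> i = j then d i else 0)"

lemma qmat_diag_qmats: "qmat_diag m d \<in> qmats m"
  unfolding qmat_diag_def qmats_def by auto

lemma qmat_diag_mult: "qmat_mult m (qmat_diag m d) (qmat_diag m e) = qmat_diag m (\<lambda>i. d i * e i)"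
  unfolding qmat_mult_def qmat_diag_def
  by (auto intro!: ext simp: if_distrib[of "\<lambda>x. x * _"] cong: if_cong)

lemma qmat_ct_diag: "qmat_ct (qmat_diag m d) = qmat_diag m (\<lambda>i. qcnj (d i))"
  unfolding qmat_ct_def qmat_diag_def by (auto intro!: ext simp: quat_eq_iff)

lemma qmat_id_diag: "qmat_id m = qmat_diag m (\<lambda>_. 1)"
  unfolding qmat_id_def qmat_diag_def by auto

lemma I_n1_diag: "I_n1 n = qmat_diag (n + 1) (\<lambda>i. if i < n then 1 else - 1)"
  unfolding I_n1_def qmat_diag_def by (auto intro!: ext)

lemma qmat_diag_cong: "(\<And>i. i < m \<Longrightarrow> d i = e i) \<Longrightarrow> qmat_diag m d = qmat_diag m e"
  unfolding qmat_diag_def by (auto intro!: ext)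

lemma qmat_diag_unit_Sp_n1:
  assumes "\<And>i. i \<le> n \<Longrightarrow> qcnj (d i) * d i = 1"
  shows "qmat_diag (n + 1) d \<in> Sp_n1 n"
proof -
  let ?D = "qmat_diag (n + 1)"
  have "qmat_mult (n + 1) (?D d) (?D (\<lambda>i. qcnj (d i))) = qmat_id (n + 1)"
    unfolding qmat_diag_mult qmat_id_diag
    using assms by (auto simp: qcnj_mult_self_commute intro!: qmat_diag_cong)
  moreover have "qmat_mult (n + 1) (?D (\<lambda>i. qcnj (d i))) (?D d) = qmat_id (n + 1)"
    unfolding qmat_diag_mult qmat_id_diag using assms by (auto intro!: qmat_diag_cong)
  moreover have "qmat_mult (n + 1) (qmat_ct (?D d)) (qmat_mult (n + 1) (I_n1 n) (?D d)) = I_n1 n"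
    unfolding I_n1_diag qmat_ct_diag qmat_diag_mult using assms by (auto intro!: qmat_diag_cong)
  ultimately show ?thesis
    unfolding Sp_n1_def qGL_def using qmat_diag_qmats by blast
qed

lemma Sp_n1_inv:
  assumes "g \<in> Sp_n1 n"
  shows "qmat_inv (n + 1) g = qmat_mult (n + 1) (I_n1 n) (qmat_mult (n + 1) (qmat_ct g) (I_n1 n))"
proof (rule qmat_inv_eqI)
  have "qmat_mult (n + 1) (I_n1 n) (I_n1 n) = qmat_id (n + 1)"
    by (auto simp: I_n1_diag qmat_diag_mult qmat_id_diag intro!: arg_cong[where f = "qmat_diag _"])
  with assms show "qmat_mult (n + 1)
      (qmat_mult (n + 1) (I_n1 n) (qmat_mult (n + 1) (qmat_ct g) (I_n1 n))) g = qmat_id (n + 1)"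
    unfolding Sp_n1_def by (simp add: qmat_mult_assoc)
qed (use assms in \<open>auto simp: Sp_n1_def qmat_mult_qmats\<close>)

lemma qmat_diag_middle_one_plus_Sp11:
  assumes "qcnj q * q = 1"
  shows "qmat_diag 3 (\<lambda>i. if i = 1 then q else 1) \<in> one_plus_Sp11"
proof -
  have "qmat_diag (1 + 1) (\<lambda>i. if i = 0 then q else 1) \<in> Sp_n1 1"
    using assms by (intro qmat_diag_unit_Sp_n1) simp
  then show ?thesis
    unfolding one_plus_Sp11_def by (auto simp: qmat_diag_def intro!: exI ext)
qed

lemma qtrace_Sp21_conj_diag:
  assumes "g \<in> Sp_n1 2"
  shows "qtrace 3
           (qmat_mult 3 (qmat_mult 3 g (qmat_diag 3 (\<lambda>i. if i = 1 then q else 1))) (qmat_inv 3 g))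
       = lorentz_sandwich (g 0 0) (g 1 0) (g 2 0) 1 + lorentz_sandwich (g 0 1) (g 1 1) (g 2 1) q
         - lorentz_sandwich (g 0 2) (g 1 2) (g 2 2) 1"
proof -
  have "qmat_inv 3 g = qmat_mult 3 (I_n1 2) (qmat_mult 3 (qmat_ct g) (I_n1 2))"
    using Sp_n1_inv[OF assms] by simp
  then show ?thesis
    by (simp add: qtrace_def qmat_mult_def qmat_diag_def qmat_ct_def I_n1_def lorentz_sandwich_def
        sum_lessThan_3 algebra_simps)
qed

lemma Sp21_column_lorentz_norm:
  assumes "g \<in> Sp_n1 2"
  shows "qre (lorentz_sandwich (g 0 1) (g 1 1) (g 2 1) 1) = 1"
proof -
  have "qre (qmat_mult 3 (qmat_ct g) (qmat_mult 3 (I_n1 2) g) 1 1) = qre (I_n1 2 1 1)"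
    using assms unfolding Sp_n1_def by simp
  then show ?thesis
    by (simp add: qmat_mult_def qmat_ct_def I_n1_def lorentz_sandwich_def sum_lessThan_3 algebra_simps)
qed

theorem lemma4p6:
  assumes "g \<in> Sp_n1 2"
  shows "\<not> (qtrace 3 ` {qmat_mult 3 (qmat_mult 3 g h) (qmat_inv 3 g) | h. h \<in> one_plus_Sp11}
             \<subseteq> range quat_of_real)"
proof
  assume real_traces: "qtrace 3 ` {qmat_mult 3 (qmat_mult 3 g h) (qmat_inv 3 g) | h. h \<in> one_plus_Sp11}
             \<subseteq> range quat_of_real"
  obtain q where q: "q \<in> {Quat 0 1 0 0, Quat 0 0 1 0, Quat 0 0 0 1}"
    and nonreal: "lorentz_sandwich (g 0 1) (g 1 1) (g 2 1) q \<notin> range quat_of_real"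
    using lorentz_sandwich_nonreal[OF Sp21_column_lorentz_norm[OF assms]] by blast
  have "qcnj q * q = 1"
    using q by (auto simp: quat_eq_iff)
  then have "qtrace 3
      (qmat_mult 3 (qmat_mult 3 g (qmat_diag 3 (\<lambda>i. if i = 1 then q else 1))) (qmat_inv 3 g))
      \<in> range quat_of_real"
    using real_traces qmat_diag_middle_one_plus_Sp11 by blast
  then have "lorentz_sandwich (g 0 1) (g 1 1) (g 2 1) q \<in> range quat_of_real"
    using lorentz_sandwich_one_real
    unfolding qtrace_Sp21_conj_diag[OF assms] by (simp add: range_quat_of_real_iff)
  with nonreal show False ..
qed

end
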